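(* Let $w=w_1\cdots w_n$ be a word of length $n\ge 2$ using only two letters, such that $w_i\ne w_{n-i+1}$ for all $1\le i\le n$. Then $f(w)=2n$.
   Context: A word of length $n$ is a sequence $w=w_1w_2\cdots w_n$ of letters (symbols). Let $[n]=\{1,\dots,n\}$. An $n$-grid is a function $G:[n]^2\to\Sigma$, where $\Sigma$ is an arbitrary set of letters. The $i$th row of $G$ contains $w$ if $G(i,j)=w_j$ for all $1\le j\le n$, or $G(i,j)=w_{n-j+1}$ for all $1\le j\le n$. The $j$th column contains $w$ if $G(i,j)=w_i$ for all $i$, or $G(i,j)=w_{n-i+1}$ for all $i$. The main diagonal contains $w$ if $G(i,i)=w_i$ for all $i$ or $G(i,i)=w_{n-i+1}$ for all $i$; the anti-diagonal contains $w$ if $G(i,n-i+1)=w_i$ for all $i$ or $G(i,n-i+1)=w_{n-i+1}$ for all $i$. Let $f(w,G)$ be the number of the $2n+2$ lines ($n$ rows, $n$ columns, $2$ diagonals) of $G$ that contain $w$, and $f(w)=\max_G f(w,G)$ over all $n$-grids $G$. *)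

theory Defs
  imports Main
begin

text \<open>Words are lists; the letter w_j (1-based) is w ! (j - 1).
  An n-grid is a function G :: nat \<Rightarrow> nat \<Rightarrow> 'a, of which only the values
  on {1..n} x {1..n} matter.\<close>

definition seq_contains :: "'a list \<Rightarrow> (nat \<Rightarrow> 'a) \<Rightarrow> bool" where
  "seq_contains w s \<longleftrightarrow>
     (\<forall>k\<in>{1..length w}. s k = w ! (k - 1)) \<or>
     (\<forall>k\<in>{1..length w}. s k = w ! (length w - k))"

definition row_contains :: "'a list \<Rightarrow> (nat \<Rightarrow> nat \<Rightarrow> 'a) \<Rightarrow> nat \<Rightarrow> bool" where
  "row_contains w G i \<longleftrightarrow> seq_contains w (\<lambda>j. G i j)"

definition col_contains :: "'a list \<Rightarrow> (nat \<Rightarrow> nat \<Rightarrow> 'a) \<Rightarrow> nat \<Rightarrow> bool" where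
  "col_contains w G j \<longleftrightarrow> seq_contains w (\<lambda>i. G i j)"

definition diag_contains :: "'a list \<Rightarrow> (nat \<Rightarrow> nat \<Rightarrow> 'a) \<Rightarrow> bool" where
  "diag_contains w G \<longleftrightarrow> seq_contains w (\<lambda>i. G i i)"

definition antidiag_contains :: "'a list \<Rightarrow> (nat \<Rightarrow> nat \<Rightarrow> 'a) \<Rightarrow> bool" where
  "antidiag_contains w G \<longleftrightarrow> seq_contains w (\<lambda>i. G i (length w - i + 1))"

definition fwG :: "'a list \<Rightarrow> (nat \<Rightarrow> nat \<Rightarrow> 'a) \<Rightarrow> nat" where
  "fwG w G =
     card {i\<in>{1..length w}. row_contains w G i}
   + card {j\<in>{1..length w}. col_contains w G j}
   + (if diag_contains w G then 1 else 0)
   + (if antidiag_contains w G then 1 else 0)"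

definition fw :: "'a list \<Rightarrow> nat" where
  "fw w = Max (range (fwG w))"

end

theory Submission
  imports Defs
begin

text \<open>Since w_i \<noteq> w_(n+1-i), the length n = 2m is even, and every line containing w carries
  the two distinct letters w_m, w_(m+1) at its two central positions. The six lines through
  the central 2x2 block of a grid therefore force six pairs of its cells to carry distinct
  letters; but a colouring of the four cells with two letters makes at most four of the six
  pairs distinct, so f(w) \<le> (n - 2) + (n - 2) + 4 = 2n. Conversely, because reversing w
  swaps its two letters a and b, the grid whose i-th row is w when w_i = a and the reversal
  of w otherwise has every row and every column containing w.\<close>

definition antipalindrome :: "'a list \<Rightarrow> bool" where
  "antipalindrome w \<longleftrightarrow> (\<forall>i\<in>{1..length w}. w ! (i - 1) \<noteq> w ! (length w - i))"

lemma antipalindrome_even_length: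
  assumes "antipalindrome w"
  shows "even (length w)"
proof (rule ccontr)
  assume "odd (length w)"
  then obtain k where k: "length w = 2 * k + 1" by (rule oddE)
  then have "Suc k \<in> {1..length w}" by simp
  with assms have "w ! k \<noteq> w ! (length w - Suc k)" unfolding antipalindrome_def by force
  with k show False by simp
qed

lemma seq_contains_middle:
  assumes "seq_contains w s" and "length w = 2 * m" and "m > 0"
  shows "{s m, s (Suc m)} = {w ! (m - 1), w ! m}"
proof -
  have "m \<in> {1..length w}" "Suc m \<in> {1..length w}" using assms(2,3) by auto
  moreover have "length w - m = m" "length w - Suc m = m - 1" using assms(2) by auto
  ultimately show ?thesis using assms(1) unfolding seq_contains_def by auto
qed

lemma antipalindrome_middle_distinct:
  assumes "antipalindrome w" and "length w = 2 * m" and "m > 0"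
  shows "w ! (m - 1) \<noteq> w ! m"
proof -
  have "m \<in> {1..length w}" "length w - m = m" using assms(2,3) by auto
  with assms(1) show ?thesis unfolding antipalindrome_def by metis
qed

lemma antipalindrome_seq_contains_middle:
  assumes "antipalindrome w" and "seq_contains w s" and "length w = 2 * m" and "m > 0"
  shows "s m \<noteq> s (Suc m) \<and> {s m, s (Suc m)} \<subseteq> set w"
proof -
  have "{s m, s (Suc m)} = {w ! (m - 1), w ! m}"
    using seq_contains_middle[OF assms(2-4)] .
  moreover have "w ! (m - 1) \<noteq> w ! m"
    using antipalindrome_middle_distinct[OF assms(1,3,4)] .
  moreover have "m - 1 < length w" "m < length w" using assms(3,4) by auto
  ultimately show ?thesis by (auto simp: doubleton_eq_iff)
qed

lemma card_two_at_most_four_distinct_pairs: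
  assumes "card S = 2"
  shows "of_bool (A \<noteq> B \<and> {A, B} \<subseteq> S) + of_bool (C \<noteq> D \<and> {C, D} \<subseteq> S)
       + of_bool (A \<noteq> C \<and> {A, C} \<subseteq> S) + of_bool (B \<noteq> D \<and> {B, D} \<subseteq> S)
       + of_bool (A \<noteq> D \<and> {A, D} \<subseteq> S) + of_bool (B \<noteq> C \<and> {B, C} \<subseteq> S) \<le> (4::nat)"
proof -
  obtain a b where "S = {a, b}" "a \<noteq> b" using assms by (meson card_2_iff)
  then show ?thesis by auto
qed

lemma card_filter_two_points:
  assumes "finite A" "a \<in> A" "b \<in> A" "a \<noteq> b"
  shows "card {x\<in>A. P x} + 2 \<le> card A + of_bool (P a) + of_bool (P b)"
proof -
  let ?F = "{x\<in>{a, b}. \<not> P x}"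
  have "card ({x\<in>A. P x} \<union> ?F) \<le> card A"
    using assms by (intro card_mono) auto
  moreover have "card ({x\<in>A. P x} \<union> ?F) = card {x\<in>A. P x} + card ?F"
    using assms(1) by (intro card_Un_disjoint) auto
  moreover have "?F = (if P a then {} else {a}) \<union> (if P b then {} else {b})" by auto
  then have "card ?F + of_bool (P a) + of_bool (P b) = 2"
    using assms(4) by simp
  ultimately show ?thesis by linarith
qed

lemma fwG_le_twice_length:
  assumes "antipalindrome w" and "card (set w) = 2"
  shows "fwG w G \<le> 2 * length w"
proof -
  obtain m where n: "length w = 2 * m"
    using antipalindrome_even_length[OF assms(1)] by (rule evenE)
  have "m > 0" using n assms(2) by (intro gr0I) auto
  note pair = antipalindrome_seq_contains_middle[OF assms(1) _ n \<open>m > 0\<close>]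
  have mid: "m \<in> {1..length w}" "Suc m \<in> {1..length w}" using n \<open>m > 0\<close> by auto
  note central = card_filter_two_points[OF finite_atLeastAtMost mid n_not_Suc_n]
  let ?A = "G m m" and ?B = "G m (Suc m)" and ?C = "G (Suc m) m" and ?D = "G (Suc m) (Suc m)"
  have "of_bool (row_contains w G m) \<le>
      (of_bool (?A \<noteq> ?B \<and> {?A, ?B} \<subseteq> set w) :: nat)"
    using pair[of "\<lambda>j. G m j"] unfolding row_contains_def by auto
  moreover have "of_bool (row_contains w G (Suc m)) \<le>
      (of_bool (?C \<noteq> ?D \<and> {?C, ?D} \<subseteq> set w) :: nat)"
    using pair[of "\<lambda>j. G (Suc m) j"] unfolding row_contains_def by auto
  moreover have "of_bool (col_contains w G m) \<le>
      (of_bool (?A \<noteq> ?C \<and> {?A, ?C} \<subseteq> set w) :: nat)"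
    using pair[of "\<lambda>i. G i m"] unfolding col_contains_def by auto
  moreover have "of_bool (col_contains w G (Suc m)) \<le>
      (of_bool (?B \<noteq> ?D \<and> {?B, ?D} \<subseteq> set w) :: nat)"
    using pair[of "\<lambda>i. G i (Suc m)"] unfolding col_contains_def by auto
  moreover have "of_bool (diag_contains w G) \<le>
      (of_bool (?A \<noteq> ?D \<and> {?A, ?D} \<subseteq> set w) :: nat)"
    using pair[of "\<lambda>i. G i i"] unfolding diag_contains_def by auto
  moreover have "length w - m + 1 = Suc m" "length w - Suc m + 1 = m" using n \<open>m > 0\<close> by auto
  then have "of_bool (antidiag_contains w G) \<le>
      (of_bool (?B \<noteq> ?C \<and> {?B, ?C} \<subseteq> set w) :: nat)"
    using pair[of "\<lambda>i. G i (length w - i + 1)"] unfolding antidiag_contains_def by auto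
  moreover note card_two_at_most_four_distinct_pairs[OF assms(2), of ?A ?B ?C ?D]
  moreover note central[of "row_contains w G"] central[of "col_contains w G"]
  moreover have "fwG w G = card {i\<in>{1..length w}. row_contains w G i}
      + card {j\<in>{1..length w}. col_contains w G j}
      + of_bool (diag_contains w G) + of_bool (antidiag_contains w G)"
    unfolding fwG_def by simp
  moreover have "card {1..length w} = length w" by simp
  ultimately show ?thesis by linarith
qed

lemma antipalindrome_two_letters_swap:
  assumes "antipalindrome w" and "set w = {a, b}" and "k \<in> {1..length w}"
  shows "w ! (length w - k) = (if w ! (k - 1) = a then b else a)"
proof -
  have "k - 1 < length w" "length w - k < length w" using assms(3) by auto
  then have "w ! (k - 1) \<in> {a, b}" "w ! (length w - k) \<in> {a, b}"
    using assms(2) nth_mem by metis+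
  moreover have "w ! (k - 1) \<noteq> w ! (length w - k)"
    using assms(1,3) unfolding antipalindrome_def by blast
  ultimately show ?thesis by auto
qed

definition antipalindrome_grid :: "'a list \<Rightarrow> 'a \<Rightarrow> nat \<Rightarrow> nat \<Rightarrow> 'a" where
  "antipalindrome_grid w a i j = (if w ! (i - 1) = a then w ! (j - 1) else w ! (length w - j))"

lemma row_contains_antipalindrome_grid: "row_contains w (antipalindrome_grid w a) i"
  unfolding row_contains_def seq_contains_def antipalindrome_grid_def
  by (cases "w ! (i - 1) = a") simp_all

lemma col_contains_antipalindrome_grid:
  assumes "antipalindrome w" and "set w = {a, b}" and "a \<noteq> b" and "j \<in> {1..length w}"
  shows "col_contains w (antipalindrome_grid w a) j"
proof (cases "w ! (j - 1) = a")
  case True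
  then have "w ! (length w - j) = b"
    using antipalindrome_two_letters_swap[OF assms(1,2,4)] by simp
  have "antipalindrome_grid w a k j = w ! (k - 1)" if "k \<in> {1..length w}" for k
  proof -
    have "k - 1 < length w" using that by auto
    then have "w ! (k - 1) \<in> {a, b}" using assms(2) nth_mem by metis
    then show ?thesis
      using True \<open>w ! (length w - j) = b\<close> unfolding antipalindrome_grid_def by auto
  qed
  then show ?thesis unfolding col_contains_def seq_contains_def by simp
next
  case False
  have "j - 1 < length w" using assms(4) by auto
  then have "w ! (j - 1) \<in> {a, b}" using assms(2) nth_mem by metis
  with False have "w ! (j - 1) = b" by simp
  have "w ! (length w - j) = a"
    using antipalindrome_two_letters_swap[OF assms(1,2,4)] False by simp
  have "antipalindrome_grid w a k j = w ! (length w - k)" if "k \<in> {1..length w}" for k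
    using antipalindrome_two_letters_swap[OF assms(1,2) that]
      \<open>w ! (j - 1) = b\<close> \<open>w ! (length w - j) = a\<close>
    unfolding antipalindrome_grid_def by simp
  then show ?thesis unfolding col_contains_def seq_contains_def by simp
qed

lemma fwG_antipalindrome_grid_ge:
  assumes "antipalindrome w" and "set w = {a, b}" and "a \<noteq> b"
  shows "2 * length w \<le> fwG w (antipalindrome_grid w a)"
proof -
  have "{i\<in>{1..length w}. row_contains w (antipalindrome_grid w a) i} = {1..length w}"
    using row_contains_antipalindrome_grid by auto
  moreover have "{j\<in>{1..length w}. col_contains w (antipalindrome_grid w a) j} = {1..length w}"
    using col_contains_antipalindrome_grid[OF assms] by auto
  ultimately show ?thesis unfolding fwG_def by simp
qed

lemma fw_eqI:
  assumes "\<And>G. fwG w G \<le> N" and "N \<le> fwG w G\<^sub>0"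
  shows "fw w = N"
proof -
  have "range (fwG w) \<subseteq> {..N}" using assms(1) by auto
  then have fin: "finite (range (fwG w))" by (rule finite_subset) simp
  have "Max (range (fwG w)) \<le> N"
    using assms(1) by (intro Max.boundedI[OF fin]) auto
  moreover have "fwG w G\<^sub>0 \<le> Max (range (fwG w))"
    using fin by (rule Max_ge) simp
  ultimately show ?thesis unfolding fw_def using assms(2) by linarith
qed

theorem proposition3:
  fixes w :: "'a list"
  assumes "length w \<ge> 2"
    and "card (set w) = 2"
    and "\<forall>i\<in>{1..length w}. w ! (i - 1) \<noteq> w ! (length w - i)"
  shows "fw w = 2 * length w"
proof -
  have anti: "antipalindrome w" using assms(3) unfolding antipalindrome_def .
  obtain a b where ab: "set w = {a, b}" "a \<noteq> b" using assms(2) by (meson card_2_iff)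
  show ?thesis
    using fwG_le_twice_length[OF anti assms(2)] fwG_antipalindrome_grid_ge[OF anti ab]
    by (rule fw_eqI)
qed

end
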